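(* If $R$ is a saturated transfer system on a finite modular lattice $M$, then the set $R_{cov}$ of covering relations of $M$ contained in $R$ is a saturated cover.
   Context: A lattice $M$ is modular if $a\le b$ implies $a\vee(x\wedge b)=(a\vee x)\wedge b$. A transfer system on a finite lattice $(P,\le)$ is a partial order $R$ refining $\le$ closed under restriction: $x\,R\,z$ and $y\le z$ imply $(x\wedge y)\,R\,y$; it is saturated if $x\,R\,y$, $y\le z$ and $x\,R\,z$ imply $y\,R\,z$. A covering diamond is a quadruple $x,y,x\wedge y,x\vee y$ with $x\ne y$ such that $x\vee y$ covers $x$ and $y$ and both $x,y$ cover $x\wedge y$. A saturated cover on $M$ is a set $Q$ of covering relations of $M$ such that (1) for all $x,y$, if $x\,Q\,(x\vee y)$ then $(x\wedge y)\,Q\,y$; (2) for every covering diamond, if three of its four covering relations lie in $Q$, so does the fourth. *)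

theory Defs
  imports Main
begin

definition modular_lattice :: "'a::lattice itself \<Rightarrow> bool" where
  "modular_lattice _ \<longleftrightarrow>
     (\<forall>a b x :: 'a. a \<le> b \<longrightarrow> sup a (inf x b) = inf (sup a x) b)"

definition covers :: "'a::order \<Rightarrow> 'a \<Rightarrow> bool" where
  "covers x y \<longleftrightarrow> x < y \<and> \<not> (\<exists>z. x < z \<and> z < y)"

definition transfer_system :: "('a::lattice \<Rightarrow> 'a \<Rightarrow> bool) \<Rightarrow> bool" where
  "transfer_system R \<longleftrightarrow>
     (\<forall>x. R x x) \<and>
     (\<forall>x y. R x y \<longrightarrow> R y x \<longrightarrow> x = y) \<and>
     (\<forall>x y z. R x y \<longrightarrow> R y z \<longrightarrow> R x z) \<and>
     (\<forall>x y. R x y \<longrightarrow> x \<le> y) \<and>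
     (\<forall>x y z. R x z \<longrightarrow> y \<le> z \<longrightarrow> R (inf x y) y)"

definition saturated :: "('a::lattice \<Rightarrow> 'a \<Rightarrow> bool) \<Rightarrow> bool" where
  "saturated R \<longleftrightarrow> (\<forall>x y z. R x y \<longrightarrow> y \<le> z \<longrightarrow> R x z \<longrightarrow> R y z)"

definition covering_diamond :: "'a::lattice \<Rightarrow> 'a \<Rightarrow> bool" where
  "covering_diamond x y \<longleftrightarrow> x \<noteq> y \<and>
     covers x (sup x y) \<and> covers y (sup x y) \<and>
     covers (inf x y) x \<and> covers (inf x y) y"

definition saturated_cover :: "('a::lattice \<times> 'a) set \<Rightarrow> bool" where
  "saturated_cover Q \<longleftrightarrow>
     (\<forall>(a, b) \<in> Q. covers a b) \<and>
     (\<forall>x y. (x, sup x y) \<in> Q \<longrightarrow> (inf x y, y) \<in> Q) \<and>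
     (\<forall>x y. covering_diamond x y \<longrightarrow>
        (let D = {(inf x y, x), (inf x y, y), (x, sup x y), (y, sup x y)}
         in card (D \<inter> Q) \<ge> 3 \<longrightarrow> D \<subseteq> Q))"

definition cov_part :: "('a::lattice \<Rightarrow> 'a \<Rightarrow> bool) \<Rightarrow> ('a \<times> 'a) set" where
  "cov_part R = {(a, b). covers a b \<and> R a b}"

end

theory Submission
  imports Defs
begin

text \<open>In a saturated transfer system R a b propagates to every a \<le> x \<le> b:
  restriction along x gives R a x, and saturation then gives R x b. Consequently a covering
  diamond with three edges in R contains a full path from bottom to top, hence R between its
  bottom and top, hence all four edges. Closure under restriction of covering relations is
  the diamond isomorphism theorem of modular lattices: [x, x \<squnion> y] \<cong> [x \<sqinter> y, y].\<close>

lemma covers_inf_if_covers_sup: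
  fixes x y :: "'a::lattice"
  assumes modular: "modular_lattice TYPE('a)" and cov: "covers x (sup x y)"
  shows "covers (inf x y) y"
  unfolding covers_def
proof
  have modular_law: "\<And>a b z::'a. a \<le> b \<Longrightarrow> sup a (inf z b) = inf (sup a z) b"
    using modular unfolding modular_lattice_def by blast
  show "inf x y < y"
    using cov unfolding covers_def by (metis inf.absorb_iff2 inf_le2 order.strict_iff_order sup.absorb1)
  show "\<not> (\<exists>z. inf x y < z \<and> z < y)"
  proof
    assume "\<exists>z. inf x y < z \<and> z < y"
    then obtain z where lower: "inf x y < z" and upper: "z < y" by blast
    have "\<not> z \<le> x" using lower upper by (metis inf.orderE inf_mono less_le_not_le order_refl)
    then have "x < sup x z" by (metis less_le sup.cobounded1 sup.orderI sup_commute)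
    moreover have "sup x z \<le> sup x y" using upper by (simp add: le_supI2)
    ultimately have "sup x z = sup x y" using cov unfolding covers_def by (metis less_le)
    have "z = sup z (inf x y)" using lower by (simp add: sup.absorb1 less_imp_le)
    also have "\<dots> = inf (sup z x) y" using modular_law[of z y x] upper by simp
    also have "\<dots> = y" using \<open>sup x z = sup x y\<close> by (simp add: sup_commute inf.absorb2)
    finally show False using upper by simp
  qed
qed

lemma saturated_transfer_system_interval:
  assumes "transfer_system R" "saturated R"
    and "R a b" "a \<le> x" "x \<le> b"
  shows "R a x" "R x b"
proof -
  have "R (inf a x) x" using assms(1,3,5) unfolding transfer_system_def by blast
  then show "R a x" using \<open>a \<le> x\<close> by (simp add: inf.absorb1)
  then show "R x b" using assms(2,3,5) unfolding saturated_def by blast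
qed

lemma pair_meets_if_card_Int_ge:
  assumes "finite D" "card D \<le> Suc (card (D \<inter> Q))"
    and "p \<in> D" "q \<in> D" "p \<noteq> q"
  shows "p \<in> Q \<or> q \<in> Q"
proof (rule ccontr)
  assume "\<not> (p \<in> Q \<or> q \<in> Q)"
  then have "card (D \<inter> Q) \<le> card (D - {p, q})"
    using assms(1) by (intro card_mono) auto
  also have "\<dots> = card D - 2"
    using assms(3-5) by (simp add: card_Diff_subset)
  finally have "card (D \<inter> Q) \<le> card D - 2" .
  moreover have "2 \<le> card D"
    using card_mono[of D "{p, q}"] assms(1,3-5) by simp
  ultimately show False using assms(2) by linarith
qed

lemma cov_part_covering_diamond_closed:
  assumes R: "transfer_system R" "saturated R" and diamond: "covering_diamond x y"
    and three: "3 \<le> card ({(inf x y, x), (inf x y, y), (x, sup x y), (y, sup x y)} \<inter> cov_part R)"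
  shows "{(inf x y, x), (inf x y, y), (x, sup x y), (y, sup x y)} \<subseteq> cov_part R"
proof -
  define a b where "a = inf x y" and "b = sup x y"
  define D where "D = {(a, x), (a, y), (x, b), (y, b)}"
  have covs: "covers a x" "covers a y" "covers x b" "covers y b" and "x \<noteq> y"
    using diamond unfolding covering_diamond_def a_def b_def by auto
  then have "a \<noteq> x" "a \<noteq> y" unfolding covers_def by auto
  have in_cov_part: "(u, v) \<in> cov_part R \<longleftrightarrow> R u v" if "covers u v" for u v
    using that unfolding cov_part_def by auto
  have card_D: "card D \<le> Suc (card (D \<inter> cov_part R))"
    using three card_length[of "[(a, x), (a, y), (x, b), (y, b)]"]
    unfolding D_def a_def b_def by simp
  then have meets: "p \<in> cov_part R \<or> q \<in> cov_part R" if "p \<in> D" "q \<in> D" "p \<noteq> q" for p q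
    using pair_meets_if_card_Int_ge[OF _ card_D that] unfolding D_def by simp
  have "(R a x \<or> R a y) \<and> (R a x \<or> R y b) \<and> (R x b \<or> R a y) \<and> (R x b \<or> R y b)"
    using meets[of "(a, x)" "(a, y)"] meets[of "(a, x)" "(y, b)"]
      meets[of "(x, b)" "(a, y)"] meets[of "(x, b)" "(y, b)"]
      \<open>x \<noteq> y\<close> \<open>a \<noteq> y\<close> \<open>a \<noteq> x\<close> in_cov_part[OF covs(1)]
      in_cov_part[OF covs(2)] in_cov_part[OF covs(3)] in_cov_part[OF covs(4)]
    unfolding D_def by auto
  then have "(R a x \<and> R x b) \<or> (R a y \<and> R y b)" by blast
  moreover have "R u w" if "R u v" "R v w" for u v w
    using R(1) that unfolding transfer_system_def by blast
  ultimately have "R a b" by blast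
  moreover have "a \<le> x" "a \<le> y" "x \<le> b" "y \<le> b" unfolding a_def b_def by auto
  ultimately have "R a x" "R a y" "R x b" "R y b"
    using saturated_transfer_system_interval[OF R] by blast+
  then show ?thesis using covs in_cov_part unfolding a_def b_def by simp
qed

theorem proposition3p6:
  fixes R :: "'a::{finite, lattice} \<Rightarrow> 'a \<Rightarrow> bool"
  assumes "modular_lattice TYPE('a)"
    and "transfer_system R"
    and "saturated R"
  shows "saturated_cover (cov_part R)"
  unfolding saturated_cover_def Let_def
proof (intro conjI allI impI)
  show "\<forall>(a, b) \<in> cov_part R. covers a b" unfolding cov_part_def by auto
next
  fix x y :: 'a
  assume "(x, sup x y) \<in> cov_part R"
  then have "covers x (sup x y)" "R x (sup x y)" unfolding cov_part_def by auto
  then have "covers (inf x y) y" "R (inf x y) y"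
    using covers_inf_if_covers_sup[OF assms(1)] assms(2) unfolding transfer_system_def by auto
  then show "(inf x y, y) \<in> cov_part R" unfolding cov_part_def by simp
next
  fix x y :: 'a
  assume "covering_diamond x y"
    and "3 \<le> card ({(inf x y, x), (inf x y, y), (x, sup x y), (y, sup x y)} \<inter> cov_part R)"
  then show "{(inf x y, x), (inf x y, y), (x, sup x y), (y, sup x y)} \<subseteq> cov_part R"
    using cov_part_covering_diamond_closed[OF assms(2,3)] by blast
qed

end
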